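(* Consider Setting B with the regular nodes running Algorithm 2, and suppose $\{\mathcal G[k]\}_{k\ge0}$ is jointly strongly $(3f+1)$-robust w.r.t. $\mathcal S$, with $T\in\mathbb N_+$ the interval length from that definition. Then for every $f$-total Byzantine adversarial set and behavior, and every $i\in\mathcal R$: $$\tau_i[k]\neq\omega\ \text{ for all }k\ge (N-|\mathcal S|)T,\qquad\text{and}\qquad \tau_i[k]\le 2(N-|\mathcal S|)T\ \text{ for all }k\ge (N-|\mathcal S|)T.$$
   Context: Setting B. Scalar system $x[k+1]=ax[k]$, $a\in\mathbb R$, monitored by nodes $\mathcal V=\{1,\dots,N\}$ with measurements $y_i[k]=c_ix[k]$, $c_i\in\mathbb R$. Source set $\mathcal S=\{i\in\mathcal V:c_i\neq0\}$. Time-varying directed graphs $\mathcal G[k]=(\mathcal V,\mathcal E[k])$, $\mathcal N_i[k]=\{l\ne i:(l,i)\in\mathcal E[k]\}$; the union graph over an interval has the union of the edge sets. An unknown set $\mathcal A\subseteq\mathcal V$ of adversarial nodes with $|\mathcal A|\le f$ ($f$-total model; $\mathcal A$ may intersect $\mathcal S$); $\mathcal R=\mathcal V\setminus\mathcal A$ are regular. Adversaries are Byzantine: at each time they may send arbitrary, possibly different values (of both estimate and freshness index) to different out-neighbors, or send nothing, and may collude. At each time $k$, each node $l$ sends to its out-neighbors a pair (estimate, freshness index); regular $l$ sends its true $(\hat x_l[k],\tau_l[k])$. Algorithm 2 (executed by regular nodes). Regular source $i\in\mathcal S$: $\tau_i[k]=0$ for all $k$ and $\hat x_i[k+1]=a\hat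 x_i[k]+l_i(y_i[k]-c_i\hat x_i[k])$ with observer gain $l_i$. Regular non-source $i$: keeps $\hat x_i[k]$ (arbitrary initial), $\tau_i[k]\in\mathbb N\cup\{\omega\}$ with $\tau_i[0]=\omega$, and a list $\mathcal M_i$ of distinct node labels (initially empty, at most $2f+1$ entries, stored in $2f+1$ slots) with, for each $l\in\mathcal M_i$, a stored estimate $v_{i,l}$, stored index $d_{i,l}\in\mathbb N$ and time stamp $\phi_{i,l}$. At time $k$ let $\mathcal J_i[k]$ be the set of $l\in\mathcal N_i[k]$ whose reported index $\tau_l[k]$ lies in $\mathbb N$ and satisfies $\tau_l[k]\le k$. "Appending $l$ at time $k$" means: put $l$ in $\mathcal M_i$ (if absent), set $v_{i,l}=\hat x_l[k]$, $d_{i,l}=\tau_l[k]$ (reported values), $\phi_{i,l}=k$. Filtering update (F) at time $k$ (requires $|\mathcal M_i|=2f+1$): set $\tau_i[k+1]=\max_{l\in\mathcal M_i}d_{i,l}+1$; form $\bar x_{i,l}[k]=a^{k-\phi_{i,l}}v_{i,l}$ for $l\in\mathcal M_i$; discard the $f$ largest and $f$ smallest of these $2f+1$ values, call the remaining one $\bar x_i[k]$, and set $\hat x_i[k+1]=a\bar x_i[k]$. Case $\tau_i[k]=\omega$: let $\mathcal J'=\mathcal J_i[k]\setminus\mathcal M_i$. If $|\mathcal M_i|+|\mathcal J'|<2f+1$, append every $l\in\mathcal J'$, set $\tau_i[k+1]=\omega$ and $\hat x_i[k+1]=a\hat x_i[k]$. Otherwise append the $2f+1-|\mathcal M_i|$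 nodes of $\mathcal J'$ with smallest reported indices (ties broken arbitrarily) and perform (F). Case $\tau_i[k]\ne\omega$: for each $l\in\mathcal J_i[k]\cap\mathcal M_i$ with reported $\tau_l[k]<d_{i,l}$, append $l$ (refreshing its entries); then rank the nodes of $\mathcal M_i\cup(\mathcal J_i[k]\setminus\mathcal M_i)$ by index ($d_{i,l}$ for $l\in\mathcal M_i$, reported $\tau_l[k]$ otherwise), keep the $2f+1$ with smallest index (ties arbitrary), appending newcomers and deleting dropped nodes (a retained node keeps its storage slot; a newcomer occupies the slot of a dropped node), and perform (F). In all cases, after the step every stored $d_{i,l}$ is incremented by $1$, and $\mathcal M_i$, $v$, $\phi$ carry over to time $k+1$. Definitions. For a graph $\mathcal G=(\mathcal V,\mathcal E)$ with in-neighbor sets $\mathcal N_i$ and $r\in\mathbb N_+$, a set $\mathcal C\subseteq\mathcal V$ is $r$-reachable if some $i\in\mathcal C$ has $|\mathcal N_i\setminus\mathcal C|\ge r$. $\mathcal G$ is strongly $r$-robust w.r.t. $\mathcal S\subset\mathcal V$ if every nonempty $\mathcal C\subseteq\mathcal V\setminus\mathcal S$ is $r$-reachable. A sequence $\{\mathcal G[k]\}$ is jointly strongly $r$-robust w.r.t. $\mathcal S$ if there is $T\in\mathbb N_+$ such that the union graph over $[kT,(k+1)T-1]$ is strongly $r$-robust w.r.t. $\mathcal S$ for every $k\in\mathbb N$. *)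

theory Defs
  imports Complex_Main
begin

text \<open>Nodes are the naturals 1..N. An edge (l,i) is directed from l to i.\<close>

definition nodes :: "nat \<Rightarrow> nat set" where
  "nodes N = {1..N}"

definition in_nbrs :: "nat \<Rightarrow> (nat \<times> nat) set \<Rightarrow> nat \<Rightarrow> nat set" where
  "in_nbrs N Ed i = {l \<in> nodes N. l \<noteq> i \<and> (l, i) \<in> Ed}"

definition sources :: "nat \<Rightarrow> (nat \<Rightarrow> real) \<Rightarrow> nat set" where
  "sources N c = {i \<in> nodes N. c i \<noteq> 0}"

definition union_edges :: "(nat \<Rightarrow> (nat \<times> nat) set) \<Rightarrow> nat \<Rightarrow> nat \<Rightarrow> (nat \<times> nat) set" where
  "union_edges E k0 k1 = (\<Union>j\<in>{k0..<k1}. E j)"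

definition r_reachable :: "nat \<Rightarrow> (nat \<times> nat) set \<Rightarrow> nat set \<Rightarrow> nat \<Rightarrow> bool" where
  "r_reachable N Ed C r \<longleftrightarrow> (\<exists>i\<in>C. card (in_nbrs N Ed i - C) \<ge> r)"

definition strongly_robust :: "nat \<Rightarrow> (nat \<times> nat) set \<Rightarrow> nat set \<Rightarrow> nat \<Rightarrow> bool" where
  "strongly_robust N Ed S r \<longleftrightarrow>
     (\<forall>C. C \<subseteq> nodes N - S \<and> C \<noteq> {} \<longrightarrow> r_reachable N Ed C r)"

definition jointly_strongly_robust_T ::
  "nat \<Rightarrow> (nat \<Rightarrow> (nat \<times> nat) set) \<Rightarrow> nat set \<Rightarrow> nat \<Rightarrow> nat \<Rightarrow> bool" where
  "jointly_strongly_robust_T N E S r T \<longleftrightarrow>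
     T > 0 \<and> (\<forall>k. strongly_robust N (union_edges E (k * T) ((k + 1) * T)) S r)"

definition jointly_strongly_robust ::
  "nat \<Rightarrow> (nat \<Rightarrow> (nat \<times> nat) set) \<Rightarrow> nat set \<Rightarrow> nat \<Rightarrow> bool" where
  "jointly_strongly_robust N E S r \<longleftrightarrow> (\<exists>T. jointly_strongly_robust_T N E S r T)"

text \<open>Freshness indices live in nat option: None stands for omega,
  Some t for the natural number t.\<close>

record nstate =
  est  :: real
  fidx :: "nat option"      \<comment> \<open>freshness index tau_i[k]\<close>
  mem  :: "nat set"
  sv   :: "nat \<Rightarrow> real"
  sd   :: "nat \<Rightarrow> nat"
  sphi :: "nat \<Rightarrow> nat"

text \<open>Remaining value after discarding the f largest and f smallest of the
  (multiset of) values g l, l in M (M has 2f+1 elements).\<close>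
definition trim_mid :: "nat \<Rightarrow> (nat \<Rightarrow> real) \<Rightarrow> nat set \<Rightarrow> real" where
  "trim_mid f g M = sort (map g (sorted_list_of_set M)) ! f"

definition upd :: "nat set \<Rightarrow> (nat \<Rightarrow> 'b) \<Rightarrow> (nat \<Rightarrow> 'b) \<Rightarrow> nat \<Rightarrow> 'b" where
  "upd App new old l = (if l \<in> App then new l else old l)"

definition store ::
  "nat set \<Rightarrow> (nat \<Rightarrow> real) \<Rightarrow> (nat \<Rightarrow> nat) \<Rightarrow> (nat \<Rightarrow> nat) \<Rightarrow> nstate \<Rightarrow> bool" where
  "store M' v' d' ph' s' \<longleftrightarrow>
     mem s' = M' \<and> (\<forall>l\<in>M'. sv s' l = v' l \<and> sd s' l = d' l + 1 \<and> sphi s' l = ph' l)"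

definition filt ::
  "nat \<Rightarrow> real \<Rightarrow> nat \<Rightarrow> nat set \<Rightarrow> (nat \<Rightarrow> real) \<Rightarrow> (nat \<Rightarrow> nat) \<Rightarrow> (nat \<Rightarrow> nat)
   \<Rightarrow> nstate \<Rightarrow> bool" where
  "filt f a k M' v' d' ph' s' \<longleftrightarrow>
     fidx s' = Some (Max (d' ` M') + 1) \<and>
     est s' = a * trim_mid f (\<lambda>l. a ^ (k - ph' l) * v' l) M'"

text \<open>One step at time k of a regular non-source node with state s, in-neighbour
  set Nin, received messages rcv (rcv l = None: nothing received from l), and
  successor state s'. Ties are broken arbitrarily (existential choice).\<close>
definition ns_step ::
  "nat \<Rightarrow> real \<Rightarrow> nat \<Rightarrow> nstate \<Rightarrow> nat set \<Rightarrow> (nat \<Rightarrow> (real \<times> nat option) option)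
   \<Rightarrow> nstate \<Rightarrow> bool" where
  "ns_step f a k s Nin rcv s' \<longleftrightarrow>
    (let J = {l \<in> Nin. \<exists>xv t. rcv l = Some (xv, Some t) \<and> t \<le> k};
         rx = (\<lambda>l. fst (the (rcv l)));
         rt = (\<lambda>l. the (snd (the (rcv l))));
         kk = (\<lambda>l::nat. k);
         M = mem s
     in if fidx s = None then
          (let J' = J - M in
           if card M + card J' < 2 * f + 1 then
             store (M \<union> J') (upd J' rx (sv s)) (upd J' rt (sd s)) (upd J' kk (sphi s)) s'
             \<and> fidx s' = None \<and> est s' = a * est s
           else
             (\<exists>A. A \<subseteq> J' \<and> card A = 2 * f + 1 - card M \<and>
                  (\<forall>l\<in>A. \<forall>l'\<in>J' - A. rt l \<le> rt l') \<and>
                  store (M \<union> A) (upd A rx (sv s)) (upd A rt (sd s)) (upd A kk (sphi s)) s' \<and>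
                  filt f a k (M \<union> A) (upd A rx (sv s)) (upd A rt (sd s)) (upd A kk (sphi s)) s'))
        else
          (let Ref = {l \<in> J \<inter> M. rt l < sd s l};
               idx = (\<lambda>l. if l \<in> M then (if l \<in> Ref then rt l else sd s l) else rt l);
               C = M \<union> (J - M)
           in \<exists>K. K \<subseteq> C \<and> card K = 2 * f + 1 \<and>
                  (\<forall>l\<in>K. \<forall>l'\<in>C - K. idx l \<le> idx l') \<and>
                  (let App = Ref \<union> (K - M) in
                    store K (upd App rx (sv s)) (upd App rt (sd s)) (upd App kk (sphi s)) s' \<and>
                    filt f a k K (upd App rx (sv s)) (upd App rt (sd s)) (upd App kk (sphi s)) s')))"

text \<open>An execution of Algorithm 2 by the regular nodes (nodes N - Adv), for the
  system x[k+1] = a x[k], measurements y_i = c_i x, observer gains L,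
  graph sequence E, adversarial set Adv, node states st i k and messages
  msg k l i (what i receives from l at time k; None = nothing).
  Adversarial messages are unconstrained (Byzantine).\<close>
definition alg2_exec ::
  "nat \<Rightarrow> nat \<Rightarrow> real \<Rightarrow> (nat \<Rightarrow> real) \<Rightarrow> (nat \<Rightarrow> real) \<Rightarrow> (nat \<Rightarrow> (nat \<times> nat) set)
   \<Rightarrow> nat set \<Rightarrow> (nat \<Rightarrow> real) \<Rightarrow> (nat \<Rightarrow> nat \<Rightarrow> nstate)
   \<Rightarrow> (nat \<Rightarrow> nat \<Rightarrow> nat \<Rightarrow> (real \<times> nat option) option) \<Rightarrow> bool" where
  "alg2_exec N f a c L E Adv x st msg \<longleftrightarrow>
     (\<forall>k. x (Suc k) = a * x k) \<and>
     (\<forall>i \<in> nodes N - Adv. c i \<noteq> 0 \<longrightarrow>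
        (\<forall>k. fidx (st i k) = Some 0 \<and>
             est (st i (Suc k)) = a * est (st i k) + L i * (c i * x k - c i * est (st i k)))) \<and>
     (\<forall>i \<in> nodes N - Adv. c i = 0 \<longrightarrow>
        fidx (st i 0) = None \<and> mem (st i 0) = {} \<and>
        (\<forall>k. ns_step f a k (st i k) (in_nbrs N (E k) i) (\<lambda>l. msg k l i) (st i (Suc k)))) \<and>
     (\<forall>k. \<forall>l \<in> nodes N - Adv. \<forall>i \<in> nodes N. l \<in> in_nbrs N (E k) i \<longrightarrow>
        msg k l i = Some (est (st l k), fidx (st l k)))"

end

theory Submission
  imports Defs
begin

text \<open>
  A regular non-source node leaves \<open>\<omega>\<close> as soon as \<open>2f+1\<close> regular in-neighbours have sent it
  a freshness index: in the \<open>\<omega>\<close>-case it keeps every such sender, and its list holds at most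
  \<open>2f\<close> entries while it is in \<open>\<omega>\<close>. Strong \<open>(3f+1)\<close>-robustness of the union graph of a period
  gives every nonempty set \<open>C\<close> of non-sources a member with \<open>2f+1\<close> regular in-neighbours outside
  \<open>C\<close>, so the set of regular non-sources lacking such a monotone property loses a member in every
  period and is empty after \<open>N - |S|\<close> periods. This is applied twice: to \<open>\<tau> \<noteq> \<omega>\<close>, and, from
  period \<open>p \<ge> N - |S|\<close> on, to ``every stored index is at most \<open>k - pT\<close>''. The latter propagates
  because a node ranks its \<open>2f+1\<close> entries by index and all stored indices age by one per step, so
  once \<open>2f+1\<close> senders delivered small indices, only small indices remain. Taking
  \<open>p = \<lfloor>k/T\<rfloor> - (N - |S|)\<close> bounds \<open>\<tau>\<^sub>i[k]\<close> by \<open>2(N - |S|)T\<close>.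
\<close>

lemma Max_image_add_const:
  fixes d g :: "'a \<Rightarrow> 'b::linordered_ab_semigroup_add"
  assumes "finite K" "K \<noteq> {}" "\<forall>l\<in>K. g l = d l + c"
  shows "Max (g ` K) = Max (d ` K) + c"
proof -
  have "g ` K = (\<lambda>l. d l + c) ` K" using assms(3) by (auto simp: image_def)
  then show ?thesis using Max_add_commute[OF assms(1,2), of d c] by simp
qed

lemma shrinking_sets_vanish:
  fixes D :: "nat \<Rightarrow> 'a set"
  assumes mono: "\<And>m. D (Suc m) \<subseteq> D m" and shrink: "\<And>m. D m \<noteq> {} \<Longrightarrow> D (Suc m) \<noteq> D m"
    and "finite (D 0)" "card (D 0) \<le> n"
  shows "D n = {}"
proof -
  have fin: "finite (D m)" for m
    using finite_subset[OF lift_Suc_antimono_le[of D, OF mono, of 0 m]] \<open>finite (D 0)\<close> by simp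
  have shrinks: "D m = {} \<or> card (D m) + m \<le> card (D 0)" for m
  proof (induction m)
    case (Suc m)
    show ?case
    proof (cases "D m = {}")
      case True
      then show ?thesis using mono[of m] by simp
    next
      case False
      then have "D (Suc m) \<subset> D m" using mono[of m] shrink[OF False] by (simp add: psubset_eq)
      then have "card (D (Suc m)) < card (D m)" by (rule psubset_card_mono[OF fin])
      then show ?thesis using Suc.IH False by simp
    qed
  qed simp
  from shrinks[of n] show ?thesis
  proof
    assume "card (D n) + n \<le> card (D 0)"
    with \<open>card (D 0) \<le> n\<close> have "card (D n) = 0" by linarith
    with fin show ?thesis by simp
  qed
qed

section \<open>One step of a non-source node\<close>

text \<open>
  A node in \<open>\<omega>\<close> never refreshes
  stored entries, so after its step every entry carries its \<open>kept_index\<close>; a node with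
  \<open>\<tau>\<^sub>i \<noteq> \<omega>\<close> refreshes a stored node exactly when it reports a smaller index, hence the
  \<open>min\<close> in \<open>rank_index\<close>, the index by which it selects its \<open>2f+1\<close> entries.
\<close>

definition received_upto :: "nat set \<Rightarrow> (nat \<Rightarrow> (real \<times> nat option) option) \<Rightarrow> nat \<Rightarrow> nat set" where
  "received_upto Nin rcv b = {l \<in> Nin. \<exists>xv t. rcv l = Some (xv, Some t) \<and> t \<le> b}"

definition reported_index :: "(nat \<Rightarrow> (real \<times> nat option) option) \<Rightarrow> nat \<Rightarrow> nat" where
  "reported_index rcv l = the (snd (the (rcv l)))"

definition kept_index :: "nstate \<Rightarrow> (nat \<Rightarrow> (real \<times> nat option) option) \<Rightarrow> nat \<Rightarrow> nat" where
  "kept_index s rcv l = (if l \<in> mem s then sd s l else reported_index rcv l)"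

definition rank_index :: "nstate \<Rightarrow> nat set \<Rightarrow> (nat \<Rightarrow> (real \<times> nat option) option) \<Rightarrow> nat \<Rightarrow> nat" where
  "rank_index s J rcv l =
     (if l \<in> mem s \<inter> J then min (sd s l) (reported_index rcv l) else kept_index s rcv l)"

lemma received_upto_index_le: "l \<in> received_upto Nin rcv b \<Longrightarrow> reported_index rcv l \<le> b"
  unfolding received_upto_def reported_index_def by auto

lemma received_upto_mono: "b \<le> b' \<Longrightarrow> received_upto Nin rcv b \<subseteq> received_upto Nin rcv b'"
  unfolding received_upto_def by auto

lemma finite_received_upto: "finite Nin \<Longrightarrow> finite (received_upto Nin rcv b)"
  unfolding received_upto_def by auto

lemma ns_step_omega:
  assumes step: "ns_step f a k s Nin rcv s'" and omega: "fidx s = None"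
  defines "J \<equiv> received_upto Nin rcv k"
  shows "(\<forall>l\<in>mem s'. sd s' l = kept_index s rcv l + 1) \<and>
    (fidx s' = None \<and> mem s' = mem s \<union> J \<and> card (mem s \<union> J) \<le> 2 * f \<or>
     (\<exists>A \<subseteq> J - mem s. card A = 2 * f + 1 - card (mem s) \<and> mem s' = mem s \<union> A \<and>
        fidx s' = Some (Max (kept_index s rcv ` (mem s \<union> A)) + 1)))"
proof -
  let ?rt = "reported_index rcv"
  have rt: "(\<lambda>l. the (snd (the (rcv l)))) = ?rt" unfolding reported_index_def ..
  have Jeq: "{l \<in> Nin. \<exists>xv t. rcv l = Some (xv, Some t) \<and> t \<le> k} = J"
    unfolding J_def received_upto_def ..
  have upd_kept: "upd A ?rt (sd s) l = kept_index s rcv l" if "A \<subseteq> J - mem s" "l \<in> mem s \<union> A" for A l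
    using that unfolding upd_def kept_index_def by auto
  then have img: "upd A ?rt (sd s) ` (mem s \<union> A) = kept_index s rcv ` (mem s \<union> A)"
    if "A \<subseteq> J - mem s" for A
    using that by (auto simp: image_def)
  have "card (mem s \<union> (J - mem s)) \<le> card (mem s) + card (J - mem s)" by (rule card_Un_le)
  moreover have "(card (mem s) + card (J - mem s) < 2 * f + 1 \<and> fidx s' = None \<and>
      (\<exists>v ph. store (mem s \<union> (J - mem s)) v (upd (J - mem s) ?rt (sd s)) ph s')) \<or>
    (\<exists>A \<subseteq> J - mem s. card A = 2 * f + 1 - card (mem s) \<and>
      (\<exists>v ph. store (mem s \<union> A) v (upd A ?rt (sd s)) ph s' \<and>
         filt f a k (mem s \<union> A) v (upd A ?rt (sd s)) ph s'))"
    using step omega unfolding ns_step_def Let_def Jeq rt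
    by (auto split: if_splits)
  ultimately show ?thesis
    using upd_kept img[OF order_refl] unfolding store_def filt_def by auto
qed

lemma ns_step_indexed:
  assumes step: "ns_step f a k s Nin rcv s'" and indexed: "fidx s \<noteq> None"
  defines "J \<equiv> received_upto Nin rcv k"
  obtains K where "K \<subseteq> mem s \<union> J" "card K = 2 * f + 1"
    "\<forall>l\<in>K. \<forall>l'\<in>mem s \<union> J - K. rank_index s J rcv l \<le> rank_index s J rcv l'"
    "mem s' = K" "\<forall>l\<in>K. sd s' l = rank_index s J rcv l + 1"
    "fidx s' = Some (Max (rank_index s J rcv ` K) + 1)"
proof -
  define rt where "rt = (\<lambda>l. the (snd (the (rcv l))))"
  define Ref where "Ref = {l \<in> J \<inter> mem s. rt l < sd s l}"
  define idx where "idx = (\<lambda>l. if l \<in> mem s then (if l \<in> Ref then rt l else sd s l) else rt l)"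
  have Jeq: "{l \<in> Nin. \<exists>xv t. rcv l = Some (xv, Some t) \<and> t \<le> k} = J"
    unfolding J_def received_upto_def ..
  have "\<exists>K. K \<subseteq> mem s \<union> (J - mem s) \<and> card K = 2 * f + 1 \<and>
      (\<forall>l\<in>K. \<forall>l'\<in>mem s \<union> (J - mem s) - K. idx l \<le> idx l') \<and>
      store K (upd (Ref \<union> (K - mem s)) (\<lambda>l. fst (the (rcv l))) (sv s))
        (upd (Ref \<union> (K - mem s)) rt (sd s)) (upd (Ref \<union> (K - mem s)) (\<lambda>l. k) (sphi s)) s' \<and>
      filt f a k K (upd (Ref \<union> (K - mem s)) (\<lambda>l. fst (the (rcv l))) (sv s))
        (upd (Ref \<union> (K - mem s)) rt (sd s)) (upd (Ref \<union> (K - mem s)) (\<lambda>l. k) (sphi s)) s'"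
    using step indexed unfolding ns_step_def Let_def Jeq rt_def[symmetric] Ref_def[symmetric]
    by (simp add: idx_def)
  moreover have idx: "idx = rank_index s J rcv"
    unfolding idx_def Ref_def rt_def rank_index_def kept_index_def reported_index_def
    by (auto simp: min_def)
  moreover have upd_rank: "upd (Ref \<union> (K - mem s)) rt (sd s) l = rank_index s J rcv l"
    if "l \<in> K" for K l
    using that unfolding upd_def idx[symmetric] idx_def Ref_def by auto
  then have "upd (Ref \<union> (K - mem s)) rt (sd s) ` K = rank_index s J rcv ` K" for K
    by (auto simp: image_def)
  ultimately show ?thesis
    using that upd_rank unfolding store_def filt_def by auto
qed

lemma rank_index_le_kept: "rank_index s J rcv l \<le> kept_index s rcv l"
  unfolding rank_index_def kept_index_def by auto

lemma rank_index_le_reported: "l \<in> J \<Longrightarrow> rank_index s J rcv l \<le> reported_index rcv l"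
  unfolding rank_index_def kept_index_def by auto

definition ns_invariant :: "nat \<Rightarrow> nat \<Rightarrow> nstate \<Rightarrow> bool" where
  "ns_invariant f k s \<longleftrightarrow> finite (mem s) \<and> (\<forall>l\<in>mem s. sd s l \<le> k) \<and>
     (case fidx s of None \<Rightarrow> card (mem s) \<le> 2 * f
      | Some t \<Rightarrow> card (mem s) = 2 * f + 1 \<and> t = Max (sd s ` mem s))"

lemma ns_step_invariant:
  assumes step: "ns_step f a k s Nin rcv s'" and "finite Nin" and inv: "ns_invariant f k s"
  shows "ns_invariant f (Suc k) s'"
proof -
  let ?J = "received_upto Nin rcv k"
  have finM: "finite (mem s)" and sd_le: "\<forall>l\<in>mem s. sd s l \<le> k"
    using inv unfolding ns_invariant_def by auto
  have kept_le: "kept_index s rcv l \<le> k" if "l \<in> mem s \<union> ?J" for l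
    using that sd_le received_upto_index_le[of l] unfolding kept_index_def by auto
  have "\<exists>d. mem s' \<subseteq> mem s \<union> ?J \<and> (\<forall>l\<in>mem s'. sd s' l = d l + 1 \<and> d l \<le> k) \<and>
      (fidx s' = None \<and> card (mem s') \<le> 2 * f \<or>
       card (mem s') = 2 * f + 1 \<and> fidx s' = Some (Max (d ` mem s') + 1))"
  proof (cases "fidx s")
    case None
    have "card (mem s \<union> A) = 2 * f + 1"
      if "A \<subseteq> ?J - mem s" "card A = 2 * f + 1 - card (mem s)" for A
    proof -
      have "finite A" using that(1) finite_received_upto[OF \<open>finite Nin\<close>] finite_subset by blast
      moreover have "mem s \<inter> A = {}" using that(1) by blast
      ultimately show ?thesis
        using that(2) inv None card_Un_disjoint[OF finM] unfolding ns_invariant_def by auto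
    qed
    with ns_step_omega[OF step None] kept_le show ?thesis
      by (intro exI[of _ "kept_index s rcv"]) (auto; blast)
  next
    case (Some t)
    then have "fidx s \<noteq> None" by simp
    with ns_step_indexed[OF step] obtain K where "K \<subseteq> mem s \<union> ?J" "card K = 2 * f + 1"
      "mem s' = K" "\<forall>l\<in>K. sd s' l = rank_index s ?J rcv l + 1"
      "fidx s' = Some (Max (rank_index s ?J rcv ` K) + 1)" by metis
    with kept_le rank_index_le_kept[of s ?J rcv] show ?thesis
      by (intro exI[of _ "rank_index s ?J rcv"]) (auto intro: le_trans)
  qed
  then obtain d where sub: "mem s' \<subseteq> mem s \<union> ?J"
    and sd': "\<forall>l\<in>mem s'. sd s' l = d l + 1 \<and> d l \<le> k"
    and cases: "fidx s' = None \<and> card (mem s') \<le> 2 * f \<or>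
       card (mem s') = 2 * f + 1 \<and> fidx s' = Some (Max (d ` mem s') + 1)" by blast
  have fin': "finite (mem s')"
    using sub finM finite_received_upto[OF \<open>finite Nin\<close>] by (meson finite_Un finite_subset)
  from cases show ?thesis
  proof
    assume indexed: "card (mem s') = 2 * f + 1 \<and> fidx s' = Some (Max (d ` mem s') + 1)"
    then have "mem s' \<noteq> {}" by auto
    with fin' sd' have "Max (sd s' ` mem s') = Max (d ` mem s') + 1"
      by (intro Max_image_add_const) auto
    with indexed fin' sd' show ?thesis unfolding ns_invariant_def by auto
  qed (use fin' sd' in \<open>auto simp: ns_invariant_def\<close>)
qed

definition index_bounded :: "nat \<Rightarrow> nstate \<Rightarrow> bool" where
  "index_bounded b s \<longleftrightarrow> fidx s \<noteq> None \<and> (\<forall>l\<in>mem s. sd s l \<le> b)"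

lemma index_bounded_fidx_le:
  assumes "ns_invariant f k s" "index_bounded b s" "fidx s = Some t"
  shows "t \<le> b"
proof -
  have "finite (mem s)" "mem s \<noteq> {}" "t = Max (sd s ` mem s)"
    using assms(1,3) unfolding ns_invariant_def by auto
  then show ?thesis using assms(2) unfolding index_bounded_def by simp
qed

lemma ns_invariant_fidx_le: "ns_invariant f k s \<Longrightarrow> fidx s = Some t \<Longrightarrow> t \<le> k"
  by (rule index_bounded_fidx_le) (auto simp: index_bounded_def ns_invariant_def)

lemma index_bounded_if_quorum:
  assumes inv: "ns_invariant f k s" and "fidx s \<noteq> None"
    and G: "G \<subseteq> {l \<in> mem s. sd s l \<le> b}" "2 * f + 1 \<le> card G"
  shows "index_bounded b s"
proof -
  have "finite (mem s)" "card (mem s) = 2 * f + 1"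
    using inv \<open>fidx s \<noteq> None\<close> unfolding ns_invariant_def by auto
  then have "G = mem s" using G card_seteq[of "mem s" G] by auto
  then show ?thesis using G(1) \<open>fidx s \<noteq> None\<close> unfolding index_bounded_def by auto
qed

lemma ns_step_keeps_index: "ns_step f a k s Nin rcv s' \<Longrightarrow> fidx s \<noteq> None \<Longrightarrow> fidx s' \<noteq> None"
  by (erule ns_step_indexed) auto

lemma ns_step_omega_collects:
  "ns_step f a k s Nin rcv s' \<Longrightarrow> fidx s = None \<Longrightarrow> fidx s' = None \<Longrightarrow>
    mem s \<union> received_upto Nin rcv k \<subseteq> mem s'"
  by (drule (1) ns_step_omega) auto

lemma ns_step_retains_small_index:
  assumes step: "ns_step f a k s Nin rcv s'" and indexed: "fidx s \<noteq> None" and "b \<le> k"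
    and l: "l \<in> mem s \<and> sd s l \<le> b \<or> l \<in> received_upto Nin rcv b"
  shows "l \<in> mem s' \<and> sd s' l \<le> Suc b \<or> index_bounded (Suc b) s'"
proof -
  let ?J = "received_upto Nin rcv k"
  let ?d = "rank_index s ?J rcv"
  obtain K where K: "\<forall>l\<in>K. \<forall>l'\<in>mem s \<union> ?J - K. ?d l \<le> ?d l'"
    "mem s' = K" "\<forall>l\<in>K. sd s' l = ?d l + 1"
    by (rule ns_step_indexed[OF step indexed]) blast+
  have indexed': "fidx s' \<noteq> None" by (rule ns_step_keeps_index[OF step indexed])
  have "l \<in> mem s \<union> ?J" using l received_upto_mono[OF \<open>b \<le> k\<close>] by blast
  moreover have "?d l \<le> b"
    using l
  proof
    assume "l \<in> mem s \<and> sd s l \<le> b"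
    then show ?thesis using rank_index_le_kept[of s ?J rcv l] unfolding kept_index_def by auto
  next
    assume "l \<in> received_upto Nin rcv b"
    then show ?thesis
      using received_upto_mono[OF \<open>b \<le> k\<close>] received_upto_index_le
        rank_index_le_reported[of l ?J s rcv] by (meson le_trans subsetD)
  qed
  ultimately show ?thesis
  proof (cases "l \<in> K")
    case False
    have "sd s' l' \<le> Suc b" if "l' \<in> mem s'" for l'
    proof -
      have "?d l' \<le> ?d l" using K(1,2) that False \<open>l \<in> mem s \<union> ?J\<close> by blast
      then show ?thesis using K(2,3) that \<open>?d l \<le> b\<close> by simp
    qed
    then show ?thesis using indexed' unfolding index_bounded_def by blast
  qed (use K in auto)
qed

lemma ns_step_index_bounded:
  assumes step: "ns_step f a k s Nin rcv s'" and "finite Nin" and inv: "ns_invariant f k s"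
    and bounded: "index_bounded b s" and "b \<le> k"
  shows "index_bounded (Suc b) s'"
proof -
  have indexed: "fidx s \<noteq> None" using bounded unfolding index_bounded_def by simp
  have "index_bounded (Suc b) s' \<or> mem s \<subseteq> {l \<in> mem s'. sd s' l \<le> Suc b}"
    using ns_step_retains_small_index[OF step indexed \<open>b \<le> k\<close>] bounded
    unfolding index_bounded_def by blast
  moreover have "card (mem s) = 2 * f + 1"
    using inv indexed unfolding ns_invariant_def by auto
  ultimately show ?thesis
    using index_bounded_if_quorum[OF ns_step_invariant[OF step \<open>finite Nin\<close> inv]
        ns_step_keeps_index[OF step indexed]] by auto
qed

section \<open>Propagation over jointly strongly robust graphs\<close>

lemma finite_in_nbrs: "finite (in_nbrs N Ed i)"
  unfolding in_nbrs_def nodes_def by auto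

lemma card_nonsources: "card (nodes N - sources N c) = N - card (sources N c)"
proof -
  have "sources N c \<subseteq> nodes N" unfolding sources_def by auto
  then show ?thesis by (simp add: card_Diff_subset finite_subset nodes_def)
qed

lemma jointly_robust_propagation:
  fixes P Q :: "nat \<Rightarrow> nat \<Rightarrow> bool"
  assumes robust: "jointly_strongly_robust_T N E S (3 * f + 1) T"
    and adv: "finite Adv" "card Adv \<le> f"
    and P_Suc: "\<And>i k. i \<in> nodes N - S - Adv \<Longrightarrow> p * T \<le> k \<Longrightarrow> P i k \<Longrightarrow> P i (Suc k)"
    and Q: "\<And>l k. l \<in> nodes N - Adv \<Longrightarrow> p * T \<le> k \<Longrightarrow> (l \<notin> S \<Longrightarrow> P l k) \<Longrightarrow> Q l k"
    and quorum: "\<And>i G k1 k2. i \<in> nodes N - S - Adv \<Longrightarrow> G \<subseteq> nodes N - Adv \<Longrightarrow>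
      2 * f + 1 \<le> card G \<Longrightarrow> p * T \<le> k1 \<Longrightarrow>
      \<forall>l\<in>G. \<exists>k\<in>{k1..<k2}. l \<in> in_nbrs N (E k) i \<and> Q l k \<Longrightarrow> P i k2"
    and i: "i \<in> nodes N - S - Adv"
  shows "P i ((p + card (nodes N - S)) * T)"
proof -
  have P_mono: "P j k'" if "j \<in> nodes N - S - Adv" "p * T \<le> k" "k \<le> k'" "P j k" for j k k'
    using that(3,4) by (induction k' rule: dec_induct) (use that(1,2) P_Suc in auto)
  define D where "D m = {j \<in> nodes N - S - Adv. \<not> P j ((p + m) * T)}" for m
  have "D (card (nodes N - S)) = {}"
  proof (rule shrinking_sets_vanish)
    show "D (Suc m) \<subseteq> D m" for m
      unfolding D_def using P_mono[of _ "(p + m) * T" "(p + Suc m) * T"] by auto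
  next
    fix m
    define U where "U = union_edges E ((p + m) * T) ((p + m + 1) * T)"
    assume "D m \<noteq> {}"
    moreover have "D m \<subseteq> nodes N - S" unfolding D_def by auto
    moreover have "strongly_robust N U S (3 * f + 1)"
      using robust unfolding jointly_strongly_robust_T_def U_def by blast
    ultimately have "r_reachable N U (D m) (3 * f + 1)" unfolding strongly_robust_def by blast
    then obtain j where j: "j \<in> D m" and reach: "3 * f + 1 \<le> card (in_nbrs N U j - D m)"
      unfolding r_reachable_def by blast
    define G where "G = in_nbrs N U j - D m - Adv"
    have "card (in_nbrs N U j - D m) - card Adv \<le> card G"
      unfolding G_def by (rule diff_card_le_card_Diff[OF adv(1)])
    then have "2 * f + 1 \<le> card G" using reach adv(2) by linarith
    moreover have "G \<subseteq> nodes N - Adv" unfolding G_def in_nbrs_def by auto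
    moreover have "\<forall>l\<in>G. \<exists>k\<in>{(p + m) * T..<(p + Suc m) * T}. l \<in> in_nbrs N (E k) j \<and> Q l k"
    proof
      fix l
      assume "l \<in> G"
      then obtain k where k: "k \<in> {(p + m) * T..<(p + Suc m) * T}" "l \<in> in_nbrs N (E k) j"
        and l: "l \<in> nodes N - Adv" "l \<notin> D m"
        unfolding G_def U_def in_nbrs_def union_edges_def by auto
      have "P l k" if "l \<notin> S"
        using P_mono[of l "(p + m) * T" k] l that k(1) unfolding D_def by auto
      moreover have "p * T \<le> k" using k(1) add_mult_distrib by auto
      ultimately show "\<exists>k\<in>{(p + m) * T..<(p + Suc m) * T}. l \<in> in_nbrs N (E k) j \<and> Q l k"
        using Q[OF l(1)] k by auto
    qed
    moreover have "j \<in> nodes N - S - Adv" using j unfolding D_def by auto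
    ultimately have "P j ((p + Suc m) * T)" using quorum[of j G "(p + m) * T"] by simp
    then show "D (Suc m) \<noteq> D m" using j unfolding D_def by auto
  next
    show "finite (D 0)" unfolding D_def nodes_def by auto
    show "card (D 0) \<le> card (nodes N - S)"
      unfolding D_def nodes_def by (rule card_mono) auto
  qed
  then show ?thesis using i unfolding D_def by auto
qed

section \<open>Executions of Algorithm 2\<close>

locale alg2_run =
  fixes N f :: nat and a :: real and c L x :: "nat \<Rightarrow> real"
    and E :: "nat \<Rightarrow> (nat \<times> nat) set" and Adv :: "nat set"
    and st :: "nat \<Rightarrow> nat \<Rightarrow> nstate"
    and msg :: "nat \<Rightarrow> nat \<Rightarrow> nat \<Rightarrow> (real \<times> nat option) option"
  assumes exec: "alg2_exec N f a c L E Adv x st msg"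
begin

abbreviation regular_nonsources :: "nat set" where
  "regular_nonsources \<equiv> nodes N - sources N c - Adv"

abbreviation received :: "nat \<Rightarrow> nat \<Rightarrow> nat \<Rightarrow> nat set" where
  "received k i b \<equiv> received_upto (in_nbrs N (E k) i) (\<lambda>l. msg k l i) b"

lemma source_fidx: "l \<in> sources N c - Adv \<Longrightarrow> fidx (st l k) = Some 0"
  using exec unfolding alg2_exec_def sources_def by blast

lemma nonsource_step:
  "i \<in> regular_nonsources \<Longrightarrow>
    ns_step f a k (st i k) (in_nbrs N (E k) i) (\<lambda>l. msg k l i) (st i (Suc k))"
  using exec unfolding alg2_exec_def sources_def by blast

lemma nonsource_invariant:
  assumes i: "i \<in> regular_nonsources"
  shows "ns_invariant f k (st i k)"
proof (induction k)
  case 0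
  then show ?case using exec i unfolding alg2_exec_def sources_def ns_invariant_def by auto
next
  case (Suc k)
  then show ?case using ns_step_invariant[OF nonsource_step[OF i] finite_in_nbrs] by blast
qed

lemma regular_fidx_le:
  assumes "l \<in> nodes N - Adv" "fidx (st l k) = Some t"
  shows "t \<le> k"
proof (cases "l \<in> sources N c")
  case True
  then show ?thesis using source_fidx assms by auto
next
  case False
  then show ?thesis using ns_invariant_fidx_le[OF nonsource_invariant] assms by blast
qed

lemma regular_in_received:
  assumes "i \<in> nodes N" "l \<in> nodes N - Adv" "l \<in> in_nbrs N (E k) i"
    and "fidx (st l k) = Some t" "t \<le> b"
  shows "l \<in> received k i b"
  using exec assms unfolding alg2_exec_def received_upto_def by auto

lemma nonsource_indexed_mono:
  assumes i: "i \<in> regular_nonsources" and "fidx (st i k) \<noteq> None" "k \<le> k'"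
  shows "fidx (st i k') \<noteq> None"
  using assms(3)
proof (induction k' rule: dec_induct)
  case (step m)
  show ?case by (rule ns_step_keeps_index[OF nonsource_step[OF i] step.IH])
qed (use assms(2) in simp)

lemma nonsource_omega_before:
  "i \<in> regular_nonsources \<Longrightarrow> fidx (st i k') = None \<Longrightarrow> k \<le> k' \<Longrightarrow> fidx (st i k) = None"
  using nonsource_indexed_mono by blast

lemma nonsource_omega_mem_mono:
  assumes i: "i \<in> regular_nonsources" and omega: "fidx (st i k') = None" and "k \<le> k'"
  shows "mem (st i k) \<subseteq> mem (st i k')"
  using \<open>k \<le> k'\<close> omega
proof (induction k' rule: dec_induct)
  case (step m)
  then have "fidx (st i m) = None" using nonsource_omega_before[OF i] by simp
  then show ?case using step ns_step_omega_collects[OF nonsource_step[OF i]] by blast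
qed simp

lemma omega_ends_with_quorum:
  assumes i: "i \<in> regular_nonsources" and G: "G \<subseteq> nodes N - Adv" "2 * f + 1 \<le> card G"
    and senders: "\<forall>l\<in>G. \<exists>k\<in>{k1..<k2}. l \<in> in_nbrs N (E k) i \<and> fidx (st l k) \<noteq> None"
  shows "fidx (st i k2) \<noteq> None"
proof
  assume omega: "fidx (st i k2) = None"
  have "G \<subseteq> mem (st i k2)"
  proof
    fix l
    assume "l \<in> G"
    then obtain k t where k: "k \<in> {k1..<k2}" "l \<in> in_nbrs N (E k) i" "fidx (st l k) = Some t"
      using senders by blast
    have l: "l \<in> nodes N - Adv" using \<open>l \<in> G\<close> G(1) by blast
    have "l \<in> received k i k"
      using regular_in_received[OF _ l k(2,3) regular_fidx_le[OF l k(3)]] i by blast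
    moreover have "fidx (st i k) = None" "fidx (st i (Suc k)) = None"
      using nonsource_omega_before[OF i omega] k(1) by auto
    ultimately have "l \<in> mem (st i (Suc k))"
      using ns_step_omega_collects[OF nonsource_step[OF i]] by blast
    moreover have "Suc k \<le> k2" using k(1) by simp
    ultimately show "l \<in> mem (st i k2)" using nonsource_omega_mem_mono[OF i omega] by (meson subsetD)
  qed
  moreover have "finite (mem (st i k2))" "card (mem (st i k2)) \<le> 2 * f"
    using nonsource_invariant[OF i, of k2] omega unfolding ns_invariant_def by auto
  ultimately have "card G \<le> 2 * f" using card_mono le_trans by blast
  with G(2) show False by simp
qed

lemma index_bounded_mono:
  assumes i: "i \<in> regular_nonsources"
    and "index_bounded (k - k0) (st i k)" "k0 \<le> k" "k \<le> k'"
  shows "index_bounded (k' - k0) (st i k')"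
  using \<open>k \<le> k'\<close>
proof (induction k' rule: dec_induct)
  case (step m)
  have "m - k0 \<le> m" by simp
  from ns_step_index_bounded[OF nonsource_step[OF i] finite_in_nbrs nonsource_invariant[OF i]
      step.IH this]
  show ?case using \<open>k0 \<le> k\<close> step.hyps(1) by (simp add: Suc_diff_le)
qed (use assms(2) in simp)

lemma small_entry_persists:
  assumes i: "i \<in> regular_nonsources" and indexed: "fidx (st i k) \<noteq> None" and "k0 \<le> k"
    and l: "l \<in> mem (st i k) \<and> sd (st i k) l \<le> k - k0 \<or> l \<in> received k i (k - k0)"
    and "k < k'"
  shows "l \<in> mem (st i k') \<and> sd (st i k') l \<le> k' - k0 \<or> index_bounded (k' - k0) (st i k')"
proof -
  have retain: "l \<in> mem (st i (Suc m)) \<and> sd (st i (Suc m)) l \<le> Suc m - k0 \<or>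
      index_bounded (Suc m - k0) (st i (Suc m))"
    if "k \<le> m" "l \<in> mem (st i m) \<and> sd (st i m) l \<le> m - k0 \<or> l \<in> received m i (m - k0)" for m
    using ns_step_retains_small_index[OF nonsource_step[OF i] nonsource_indexed_mono[OF i indexed]
        diff_le_self that(2)] \<open>k0 \<le> k\<close> that(1) by (simp add: Suc_diff_le)
  from \<open>k < k'\<close> have "Suc k \<le> k'" by simp
  then show ?thesis
  proof (induction k' rule: dec_induct)
    case base
    then show ?case using retain[OF order_refl l] .
  next
    case (step m)
    then show ?case
      using retain[of m] index_bounded_mono[OF i _ _ le_SucI[OF order_refl], of m k0] \<open>k0 \<le> k\<close>
      by auto
  qed
qed

lemma index_bounded_with_quorum:
  assumes i: "i \<in> regular_nonsources" and G: "G \<subseteq> nodes N - Adv" "2 * f + 1 \<le> card G"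
    and indexed: "fidx (st i k1) \<noteq> None" and "k0 \<le> k1"
    and senders: "\<forall>l\<in>G. \<exists>k\<in>{k1..<k2}. l \<in> in_nbrs N (E k) i \<and>
      (\<exists>t. fidx (st l k) = Some t \<and> t \<le> k - k0)"
  shows "index_bounded (k2 - k0) (st i k2)"
proof (rule ccontr)
  assume unbounded: "\<not> index_bounded (k2 - k0) (st i k2)"
  have "G \<subseteq> {l \<in> mem (st i k2). sd (st i k2) l \<le> k2 - k0}"
  proof
    fix l
    assume "l \<in> G"
    then obtain k t where k: "k \<in> {k1..<k2}" "l \<in> in_nbrs N (E k) i"
      "fidx (st l k) = Some t" "t \<le> k - k0"
      using senders by blast
    have l: "l \<in> nodes N - Adv" using \<open>l \<in> G\<close> G(1) by blast
    have "l \<in> received k i (k - k0)"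
      using regular_in_received[OF _ l k(2-4)] i by blast
    moreover have "fidx (st i k) \<noteq> None" "k0 \<le> k" "k < k2"
      using nonsource_indexed_mono[OF i indexed] k(1) \<open>k0 \<le> k1\<close> by auto
    ultimately show "l \<in> {l \<in> mem (st i k2). sd (st i k2) l \<le> k2 - k0}"
      using small_entry_persists[OF i] unbounded by blast
  qed
  moreover have "G \<noteq> {}" using G(2) by auto
  then have "k1 \<le> k2" using senders by fastforce
  then have "fidx (st i k2) \<noteq> None" by (rule nonsource_indexed_mono[OF i indexed])
  ultimately have "index_bounded (k2 - k0) (st i k2)"
    using index_bounded_if_quorum[OF nonsource_invariant[OF i]] G(2) by blast
  with unbounded show False ..
qed

context
  fixes T :: nat
  assumes robust: "jointly_strongly_robust_T N E (sources N c) (3 * f + 1) T"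
    and adv: "Adv \<subseteq> nodes N" "card Adv \<le> f"
begin

lemma finite_Adv: "finite Adv"
  using adv(1) finite_subset unfolding nodes_def by blast

lemma omega_ends:
  assumes i: "i \<in> regular_nonsources" and "(N - card (sources N c)) * T \<le> k"
  shows "fidx (st i k) \<noteq> None"
proof -
  have "fidx (st i ((0 + card (nodes N - sources N c)) * T)) \<noteq> None"
  proof (rule jointly_robust_propagation[OF robust finite_Adv adv(2), where p = 0 and i = i
        and P = "\<lambda>i k. fidx (st i k) \<noteq> None" and Q = "\<lambda>i k. fidx (st i k) \<noteq> None"])
    show "fidx (st l k) \<noteq> None" if "l \<in> nodes N - Adv" "l \<notin> sources N c \<Longrightarrow> fidx (st l k) \<noteq> None"
      for l k
      using that source_fidx by (cases "l \<in> sources N c") auto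
  qed (use i ns_step_keeps_index[OF nonsource_step] omega_ends_with_quorum in auto)
  then show ?thesis using nonsource_indexed_mono[OF i] assms(2) by (simp add: card_nonsources)
qed

lemma index_bounded_after:
  assumes i: "i \<in> regular_nonsources" and p: "N - card (sources N c) \<le> p"
  shows "index_bounded ((N - card (sources N c)) * T) (st i ((p + (N - card (sources N c))) * T))"
proof -
  have late: "fidx (st j k) \<noteq> None" if "j \<in> regular_nonsources" "p * T \<le> k" for j k
    using omega_ends[OF that(1)] that(2) p by (meson le_trans mult_le_mono1)
  have "index_bounded ((p + card (nodes N - sources N c)) * T - p * T)
      (st i ((p + card (nodes N - sources N c)) * T))"
  proof (rule jointly_robust_propagation[OF robust finite_Adv adv(2), where p = p and i = i
        and P = "\<lambda>i k. index_bounded (k - p * T) (st i k)"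
        and Q = "\<lambda>i k. \<exists>t. fidx (st i k) = Some t \<and> t \<le> k - p * T"])
    show "index_bounded (Suc k - p * T) (st j (Suc k))"
      if "j \<in> regular_nonsources" "p * T \<le> k" "index_bounded (k - p * T) (st j k)" for j k
      using index_bounded_mono[OF that(1) that(3) that(2)] by simp
    show "\<exists>t. fidx (st l k) = Some t \<and> t \<le> k - p * T"
      if "l \<in> nodes N - Adv" "p * T \<le> k"
        "l \<notin> sources N c \<Longrightarrow> index_bounded (k - p * T) (st l k)" for l k
    proof (cases "l \<in> sources N c")
      case False
      with that have "index_bounded (k - p * T) (st l k)" "l \<in> regular_nonsources" by auto
      then show ?thesis
        using index_bounded_fidx_le[OF nonsource_invariant] unfolding index_bounded_def by blast
    qed (use that source_fidx in auto)
    show "index_bounded (k2 - p * T) (st j k2)"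
      if "j \<in> regular_nonsources" "G \<subseteq> nodes N - Adv" "2 * f + 1 \<le> card G" "p * T \<le> k1"
        "\<forall>l\<in>G. \<exists>k\<in>{k1..<k2}. l \<in> in_nbrs N (E k) j \<and> (\<exists>t. fidx (st l k) = Some t \<and> t \<le> k - p * T)"
      for j G k1 k2
      using index_bounded_with_quorum[OF that(1-3) late[OF that(1,4)] that(4,5)] .
  qed (use i in auto)
  then show ?thesis by (simp add: card_nonsources add_mult_distrib)
qed

lemma nonsource_fidx_bound:
  assumes i: "i \<in> regular_nonsources" and t: "fidx (st i k) = Some t"
  shows "t \<le> 2 * (N - card (sources N c)) * T"
proof (cases "k < 2 * (N - card (sources N c)) * T")
  case True
  then show ?thesis using regular_fidx_le[OF _ t] i by fastforce
next
  case False
  let ?n = "N - card (sources N c)"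
  define q where "q = k div T"
  have "0 < T" using robust unfolding jointly_strongly_robust_T_def by simp
  have qT: "q * T \<le> k" "k < q * T + T"
    unfolding q_def using div_times_less_eq_dividend mod_less_divisor[OF \<open>0 < T\<close>, of k]
      div_mult_mod_eq[of k T] by linarith+
  have "2 * ?n \<le> q"
    unfolding q_def using False less_eq_div_iff_mult_less_eq[OF \<open>0 < T\<close>] by simp
  then have p: "?n \<le> q - ?n" and q: "q - ?n + ?n = q" by auto
  have "1 \<le> ?n"
    using i card_nonsources[of N c] card_0_eq[of "nodes N - sources N c"]
    unfolding nodes_def by force
  then have "T \<le> ?n * T" by simp
  have shift: "(q - ?n) * T = q * T - ?n * T" by (simp add: diff_mult_distrib)
  have "?n * T \<le> q * T" using \<open>2 * ?n \<le> q\<close> by simp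
  have "index_bounded (?n * T) (st i (q * T))" using index_bounded_after[OF i p] unfolding q .
  then have "index_bounded (q * T - (q - ?n) * T) (st i (q * T))"
    using shift \<open>?n * T \<le> q * T\<close> by simp
  then have "index_bounded (k - (q - ?n) * T) (st i k)"
    by (rule index_bounded_mono[OF i _ _ qT(1)]) simp
  then have "t \<le> k - (q - ?n) * T"
    using index_bounded_fidx_le[OF nonsource_invariant[OF i] _ t] by blast
  moreover have "k - (q - ?n) * T < T + ?n * T"
    using qT shift \<open>?n * T \<le> q * T\<close> by linarith
  moreover have "2 * ?n * T = ?n * T + ?n * T" by simp
  ultimately show ?thesis using \<open>T \<le> ?n * T\<close> by linarith
qed

end

end

theorem lemma6:
  fixes N f T :: nat and a :: real and c L x :: "nat \<Rightarrow> real"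
    and E :: "nat \<Rightarrow> (nat \<times> nat) set" and Adv :: "nat set"
    and st :: "nat \<Rightarrow> nat \<Rightarrow> nstate"
    and msg :: "nat \<Rightarrow> nat \<Rightarrow> nat \<Rightarrow> (real \<times> nat option) option"
  assumes edges: "\<forall>k. E k \<subseteq> nodes N \<times> nodes N"
    and robust: "jointly_strongly_robust_T N E (sources N c) (3 * f + 1) T"
    and adv: "Adv \<subseteq> nodes N" "card Adv \<le> f"
    and exec: "alg2_exec N f a c L E Adv x st msg"
  shows "\<forall>i \<in> nodes N - Adv. \<forall>k \<ge> (N - card (sources N c)) * T.
           fidx (st i k) \<noteq> None \<and>
           (\<forall>t. fidx (st i k) = Some t \<longrightarrow> t \<le> 2 * (N - card (sources N c)) * T)"
proof -
  interpret alg2_run N f a c L x E Adv st msg by (rule alg2_run.intro[OF exec])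
  show ?thesis
  proof (intro ballI allI impI conjI)
    fix i k
    assume "i \<in> nodes N - Adv" "(N - card (sources N c)) * T \<le> k"
    then show "fidx (st i k) \<noteq> None"
      using source_fidx omega_ends[OF robust adv] by (cases "i \<in> sources N c") auto
  next
    fix i k t
    assume "i \<in> nodes N - Adv" "fidx (st i k) = Some t"
    then show "t \<le> 2 * (N - card (sources N c)) * T"
      using source_fidx nonsource_fidx_bound[OF robust adv] by (cases "i \<in> sources N c") auto
  qed
qed

end
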